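(* Let $n\ge1$, $v>0$ a scalar and $\mathbf{b}$ a nonzero vector, held fixed, and for each $d\ge1$ let $h^*=\left(\frac{vd}{4n\|\mathbf{b}\|_2^2}\right)^{1/(d+4)}$ and $\operatorname{LOMSE}(h,n,d)=h^4\|\mathbf{b}\|_2^2+\frac{v}{nh^d}$. Then in high-dimensional action spaces the squared leading-order bias $(h^* )^4\|\mathbf{b}\|_2^2$ dominates the leading-order variance $\frac{v}{n(h^* )^d}$, in the sense that their ratio tends to $\infty$ as $d\to\infty$; furthermore $\operatorname{LOMSE}(h^*,n,d)\to\|\mathbf{b}\|_2^2$ as $d\to\infty$, i.e. $\operatorname{LOMSE}(h^*,n,d)$ approximates $\|\mathbf{b}\|_2^2$.
   Context: In the paper, $d$ is the action dimension, $h^*$ the optimal kernel bandwidth minimizing the leading-order MSE $\operatorname{LOMSE}$ of a kernel-relaxed importance-resampling estimate of a TD update vector, $\mathbf{b}$ the bias constant vector, $v$ the variance constant and $n$ the data size; the statement treats $\mathbf{b},v,n$ as fixed while $d$ grows. *)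

theory Defs
  imports "HOL-Analysis.Analysis"
begin

definition hstar :: "real \<Rightarrow> 'a::real_normed_vector \<Rightarrow> nat \<Rightarrow> nat \<Rightarrow> real" where
  "hstar v b n d = (v * real d / (4 * real n * (norm b)^2)) powr (1 / (real d + 4))"

definition LOMSE :: "real \<Rightarrow> 'a::real_normed_vector \<Rightarrow> real \<Rightarrow> nat \<Rightarrow> nat \<Rightarrow> real" where
  "LOMSE v b h n d = h^4 * (norm b)^2 + v / (real n * h^d)"

end

theory Submission
  imports Defs "HOL-Real_Asymp.Real_Asymp"
begin

text \<open>The bandwidth \<open>h\<^sup>*\<close> solves the first-order condition
  \<open>h\<^bsup>d+4\<^esup> = v d / (4 n \<parallel>b\<parallel>\<^sup>2)\<close> of \<open>LOMSE\<close>, which says exactly that the variance term equals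
  \<open>4/d\<close> times the squared bias term. Hence the bias-to-variance ratio is \<open>d/4 \<rightarrow> \<infinity>\<close> and
  \<open>LOMSE(h\<^sup>*) = (h\<^sup>*)\<^sup>4 \<parallel>b\<parallel>\<^sup>2 (1 + 4/d)\<close>; finally
  \<open>(h\<^sup>*)\<^sup>4 = (c d)\<^bsup>4/(d+4)\<^esup> \<rightarrow> 1\<close> for the constant \<open>c = v / (4 n \<parallel>b\<parallel>\<^sup>2)\<close>.\<close>

lemma powr_inverse_power:
  fixes x :: real
  assumes "x \<ge> 0" "k > 0"
  shows "(x powr (1 / real k)) ^ k = x"
proof (cases "x = 0")
  case False
  with assms show ?thesis
    by (simp add: powr_power powr_one)
qed (use assms in simp)

lemma hstar_power_eq:
  assumes "v \<ge> 0"
  shows "hstar v b n d ^ (d + 4) = v * real d / (4 * real n * (norm b)\<^sup>2)"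
proof -
  have "real d + 4 = real (d + 4)" by simp
  then show ?thesis
    unfolding hstar_def using assms by (simp only:) (rule powr_inverse_power, simp_all)
qed

lemma hstar_pos:
  assumes "v > 0" "b \<noteq> 0" "n \<ge> 1" "d \<ge> 1"
  shows "hstar v b n d > 0"
  using assms by (simp add: hstar_def)

lemma variance_eq_at_stationary:
  fixes h v B N :: real
  assumes "h \<noteq> 0" and stationary: "h ^ (d + 4) = v * real d / (4 * N * B)"
  shows "v / (N * h ^ d) = 4 / real d * (h ^ 4 * B)"
proof -
  have "v * real d / (4 * N * B) \<noteq> 0"
    using assms by (metis power_not_zero)
  then have "v \<noteq> 0" "d \<noteq> 0" "N \<noteq> 0" "B \<noteq> 0" by auto
  have "v / (N * h ^ d) = v * h ^ 4 / (N * h ^ (d + 4))"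
    using \<open>h \<noteq> 0\<close> by (simp add: power_add)
  also have "\<dots> = 4 / real d * (h ^ 4 * B)"
    using \<open>v \<noteq> 0\<close> \<open>d \<noteq> 0\<close> \<open>N \<noteq> 0\<close> \<open>B \<noteq> 0\<close> by (simp add: stationary field_simps)
  finally show ?thesis .
qed

lemma bias_variance_ratio_at_stationary:
  fixes h v B N :: real
  assumes "h \<noteq> 0" and stationary: "h ^ (d + 4) = v * real d / (4 * N * B)"
  shows "h ^ 4 * B / (v / (N * h ^ d)) = real d / 4"
proof -
  have "v * real d / (4 * N * B) \<noteq> 0"
    using assms by (metis power_not_zero)
  then have "d \<noteq> 0" "B \<noteq> 0" by auto
  with \<open>h \<noteq> 0\<close> show ?thesis
    by (simp add: variance_eq_at_stationary[OF assms])
qed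

lemma LOMSE_at_stationary:
  assumes "h \<noteq> 0" and "h ^ (d + 4) = v * real d / (4 * real n * (norm b)\<^sup>2)"
  shows "LOMSE v b h n d = h ^ 4 * (norm b)\<^sup>2 * (1 + 4 / real d)"
  unfolding LOMSE_def variance_eq_at_stationary[OF assms] by (simp add: algebra_simps)

lemma hstar_power4_tendsto_1:
  assumes "v > 0" "b \<noteq> 0" "n \<ge> 1"
  shows "((\<lambda>d. hstar v b n d ^ 4) \<longlongrightarrow> 1) sequentially"
proof -
  have "(norm b)\<^sup>2 > 0" "real n > 0" using assms by auto
  then show ?thesis
    unfolding hstar_def using \<open>v > 0\<close> by real_asymp
qed

theorem proposition2:
  fixes v :: real and b :: "'a::real_normed_vector" and n :: nat
  assumes "n \<ge> 1" and "v > 0" and "b \<noteq> 0"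
  shows "filterlim (\<lambda>d. ((hstar v b n d)^4 * (norm b)^2) / (v / (real n * (hstar v b n d)^d)))
           at_top sequentially \<and>
         ((\<lambda>d. LOMSE v b (hstar v b n d) n d) \<longlongrightarrow> (norm b)^2) sequentially"
proof -
  let ?h = "hstar v b n"
  have stationary: "?h d ^ (d + 4) = v * real d / (4 * real n * (norm b)\<^sup>2)" for d
    using \<open>v > 0\<close> by (simp add: hstar_power_eq)
  have h_nonzero: "\<forall>\<^sub>F d in sequentially. ?h d \<noteq> 0"
    using eventually_ge_at_top[of 1] by eventually_elim (use assms hstar_pos in force)
  have "\<forall>\<^sub>F d in sequentially. real d / 4 = ?h d ^ 4 * (norm b)\<^sup>2 / (v / (real n * ?h d ^ d))"
    using h_nonzero by eventually_elim (rule bias_variance_ratio_at_stationary[OF _ stationary, symmetric])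
  moreover have "filterlim (\<lambda>d::nat. real d / 4) at_top sequentially"
    by real_asymp
  ultimately have ratio: "filterlim (\<lambda>d. ?h d ^ 4 * (norm b)\<^sup>2 / (v / (real n * ?h d ^ d)))
      at_top sequentially"
    by (rule filterlim_cong[THEN iffD1, OF refl refl])
  have "\<forall>\<^sub>F d in sequentially. ?h d ^ 4 * (norm b)\<^sup>2 * (1 + 4 / real d) = LOMSE v b (?h d) n d"
    using h_nonzero by eventually_elim (rule LOMSE_at_stationary[OF _ stationary, symmetric])
  moreover have "((\<lambda>d. ?h d ^ 4 * (norm b)\<^sup>2 * (1 + 4 / real d)) \<longlongrightarrow> 1 * (norm b)\<^sup>2 * (1 + 0))
      sequentially"
    by (intro tendsto_intros hstar_power4_tendsto_1 assms)
  ultimately have "((\<lambda>d. LOMSE v b (?h d) n d) \<longlongrightarrow> (norm b)\<^sup>2) sequentially"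
    by (simp add: tendsto_cong)
  with ratio show ?thesis by simp
qed

end
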